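(* Let $X$ be a real random variable with distribution function $F$ and continuous density $f$, and let $h$ be its two-sided hazard function. Let $t\ge\xi_{1/2}$ with $\bar F(t)>0$, and let $X_t$ denote a random variable distributed as $X$ conditional on $X>t$. Then \[ \frac{1}{12\,\sup_{x\ge t}h(x)^2}\le \mathrm{Var}\,X_t\le\frac{4}{\inf_{x\ge t}h(x)^2}, \] where the supremum and infimum are over $x\ge t$ with $\bar F(x)>0$, and we use the conventions $1/\infty=0$ and $1/0=\infty$. The analogous statement holds for the left-hand tail: for $t<\xi_{1/2}$ with $F(t)>0$, with $X$ conditioned on $X<t$, and with $h$ taken over $x\le t$.
   Context: Let $\bar F(x)=\mathbb P(X>x)$, $F^{-1}(p)=\inf\{x:F(x)\ge p\}$ and $\xi_p=F^{-1}(p)$. The two-sided hazard function is $h(x)=f(x)/\bar F(x)$ for $x\ge\xi_{1/2}$ and $h(x)=f(x)/F(x)$ for $x<\xi_{1/2}$. *)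

theory Defs
  imports "HOL-Probability.Probability"
begin

definition cdf_rv :: "'a measure \<Rightarrow> ('a \<Rightarrow> real) \<Rightarrow> real \<Rightarrow> real" where
  "cdf_rv M X x = measure M {\<omega> \<in> space M. X \<omega> \<le> x}"

definition surv_rv :: "'a measure \<Rightarrow> ('a \<Rightarrow> real) \<Rightarrow> real \<Rightarrow> real" where
  "surv_rv M X x = measure M {\<omega> \<in> space M. X \<omega> > x}"

definition quantile_rv :: "'a measure \<Rightarrow> ('a \<Rightarrow> real) \<Rightarrow> real \<Rightarrow> real" where
  "quantile_rv M X p = Inf {x. p \<le> cdf_rv M X x}"

definition hazard2 :: "'a measure \<Rightarrow> ('a \<Rightarrow> real) \<Rightarrow> (real \<Rightarrow> real) \<Rightarrow> real \<Rightarrow> real" where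
  "hazard2 M X f x =
     (if x \<ge> quantile_rv M X (1/2) then f x / surv_rv M X x else f x / cdf_rv M X x)"

definition var_ext :: "'a measure \<Rightarrow> ('a \<Rightarrow> real) \<Rightarrow> ereal" where
  "var_ext N Y = (if integrable N (\<lambda>\<omega>. (Y \<omega>)\<^sup>2)
      then ereal (\<integral>\<omega>. (Y \<omega> - (\<integral>\<omega>'. Y \<omega>' \<partial>N))\<^sup>2 \<partial>N) else \<infinity>)"

end

theory Submission
  imports Defs
begin

(* Conditioned on X > t, X has density f(y)/S(t) on (t, infinity), where S is the survival function.
   Since S is decreasing this is at most f(y)/S(y) = h(y), so it is bounded by b = sup h; a density
   bounded by b has variance at least 1/(12 b^2), the variance of the uniform law of width 1/b.
   Conversely, if h >= c on [t, infinity) then f >= c S there, and integrating the derivative of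
   -S(x) q(x - t) with q(u) = u^2 + 2u/c + 2/c^2 gives E[(X - t)^2 | X > t] <= 2/c^2, which bounds
   the variance.  The left tail is the right tail of -X. *)

lemma var_ext_nonneg: "0 \<le> var_ext N Y"
  unfolding var_ext_def by simp

lemma var_ext_uminus: "var_ext N (\<lambda>\<omega>. - Y \<omega>) = var_ext N Y"
  unfolding var_ext_def by (simp add: power2_commute algebra_simps)

lemma integral_sq_dev_ge_if_density_le:
  fixes g :: "real \<Rightarrow> real" and b \<mu> :: real
  assumes g_nonneg: "\<And>x. 0 \<le> g x" and g_le: "\<And>x. g x \<le> b" and "0 < b"
    and integrable_g: "integrable lborel g" and integral_g: "(\<integral>x. g x \<partial>lborel) = 1"
    and integrable_sq_dev: "integrable lborel (\<lambda>x. g x * (x - \<mu>)\<^sup>2)"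
  shows "1 / (12 * b\<^sup>2) \<le> (\<integral>x. g x * (x - \<mu>)\<^sup>2 \<partial>lborel)"
proof -
  \<comment> \<open>Extremal case: g = b on the interval of radius r = 1/(2b) around \<mu>. The pointwise bound below
    compares g with it: mass of g inside the interval is at most b, mass outside sits at distance \<ge> r.\<close>
  define r where "r = 1 / (2 * b)"
  have "0 < r" using \<open>0 < b\<close> by (simp add: r_def)
  define bump where "bump x = (r\<^sup>2 - (x - \<mu>)\<^sup>2) * indicator {\<mu> - r..\<mu> + r} x" for x
  have "has_bochner_integral lborel bump
      ((r\<^sup>2 * (\<mu> + r) - ((\<mu> + r) - \<mu>) ^ 3 / 3) - (r\<^sup>2 * (\<mu> - r) - ((\<mu> - r) - \<mu>) ^ 3 / 3))"
    unfolding bump_def using \<open>0 < r\<close>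
    by (intro has_bochner_integral_FTC_Icc_real)
      (auto intro!: derivative_eq_intros simp: power2_eq_square)
  moreover have "(r\<^sup>2 * (\<mu> + r) - ((\<mu> + r) - \<mu>) ^ 3 / 3) - (r\<^sup>2 * (\<mu> - r) - ((\<mu> - r) - \<mu>) ^ 3 / 3)
      = 4 * r ^ 3 / 3"
    by (simp add: field_simps power2_eq_square power3_eq_cube)
  ultimately have bump_integral: "has_bochner_integral lborel bump (4 * r ^ 3 / 3)"
    by (simp only:)
  have "r\<^sup>2 * g x - b * bump x \<le> g x * (x - \<mu>)\<^sup>2" for x
  proof (cases "x \<in> {\<mu> - r..\<mu> + r}")
    case True
    then have "(x - \<mu>)\<^sup>2 \<le> r\<^sup>2"
      by (auto intro!: power2_le_iff_abs_le[THEN iffD2] simp: abs_le_iff)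
    then have "0 \<le> (r\<^sup>2 - (x - \<mu>)\<^sup>2) * (b - g x)"
      using g_le[of x] by simp
    with True show ?thesis by (simp add: bump_def algebra_simps)
  next
    case False
    then have "r \<le> \<bar>x - \<mu>\<bar>" by auto
    then have "r\<^sup>2 \<le> (x - \<mu>)\<^sup>2"
      using \<open>0 < r\<close> by (metis power2_abs power_mono less_imp_le)
    with False show ?thesis
      using g_nonneg[of x] by (simp add: bump_def mult.commute mult_left_mono)
  qed
  then have "(\<integral>x. r\<^sup>2 * g x - b * bump x \<partial>lborel) \<le> (\<integral>x. g x * (x - \<mu>)\<^sup>2 \<partial>lborel)"
    using integrable.intros[OF bump_integral] integrable_g integrable_sq_dev
    by (intro integral_mono) auto
  moreover have "(\<integral>x. r\<^sup>2 * g x - b * bump x \<partial>lborel) = r\<^sup>2 * 1 - b * (4 * r ^ 3 / 3)"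
    using has_bochner_integral_integrable[OF integrable_g] bump_integral
    unfolding integral_g
    by (intro has_bochner_integral_integral_eq has_bochner_integral_diff has_bochner_integral_mult_right)
  moreover have "r\<^sup>2 - b * (4 * r ^ 3 / 3) = 1 / (12 * b\<^sup>2)"
    using \<open>0 < b\<close> by (simp add: r_def field_simps power2_eq_square power3_eq_cube)
  ultimately show ?thesis by simp
qed

lemma (in prob_space) var_ext_ge_if_density_le:
  fixes Y :: "'a \<Rightarrow> real" and g :: "real \<Rightarrow> real"
  assumes Y: "distributed M lborel Y (\<lambda>x. ennreal (g x))"
    and g_nonneg: "\<And>x. 0 \<le> g x" and g_le: "\<And>x. g x \<le> b" and "0 < b"
  shows "ereal (1 / (12 * b\<^sup>2)) \<le> var_ext M Y"
proof (cases "integrable M (\<lambda>\<omega>. (Y \<omega>)\<^sup>2)")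
  case False
  then show ?thesis by (simp add: var_ext_def)
next
  case True
  have [measurable]: "g \<in> borel_measurable borel" "Y \<in> borel_measurable M"
    using distributed_real_measurable[OF _ Y] distributed_measurable[OF Y] g_nonneg by auto
  define \<mu> where "\<mu> = expectation Y"
  have "integrable M Y"
    by (rule square_integrable_imp_integrable[OF _ True]) simp
  then have "integrable M (\<lambda>\<omega>. (Y \<omega> - \<mu>)\<^sup>2)"
    using True by (simp add: power2_diff)
  then have integrable_sq_dev: "integrable lborel (\<lambda>x. g x * (x - \<mu>)\<^sup>2)"
    using distributed_integrable[OF Y, of "\<lambda>x. (x - \<mu>)\<^sup>2"] g_nonneg by simp
  have integrable_g: "integrable lborel g"
    using distributed_integrable[OF Y, of "\<lambda>_. 1"] g_nonneg by simp
  have integral_g: "(\<integral>x. g x \<partial>lborel) = 1"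
    using distributed_integral[OF Y, of "\<lambda>_. 1"] g_nonneg by (simp add: prob_space)
  have "1 / (12 * b\<^sup>2) \<le> (\<integral>x. g x * (x - \<mu>)\<^sup>2 \<partial>lborel)"
    by (rule integral_sq_dev_ge_if_density_le[OF g_nonneg g_le \<open>0 < b\<close> integrable_g integral_g
          integrable_sq_dev])
  also have "\<dots> = (\<integral>\<omega>. (Y \<omega> - \<mu>)\<^sup>2 \<partial>M)"
    using distributed_integral[OF Y, of "\<lambda>x. (x - \<mu>)\<^sup>2"] g_nonneg by simp
  finally show ?thesis
    using True by (simp add: var_ext_def \<mu>_def)
qed

lemma (in prob_space) var_ext_le_if_sq_dev_le:
  fixes Y :: "'a \<Rightarrow> real"
  assumes [measurable]: "Y \<in> borel_measurable M"
    and sq_dev: "(\<integral>\<^sup>+\<omega>. ennreal ((Y \<omega> - t)\<^sup>2) \<partial>M) \<le> ennreal K" and "0 \<le> K"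
  shows "var_ext M Y \<le> ereal K"
proof -
  have integrable_sq_dev: "integrable M (\<lambda>\<omega>. (Y \<omega> - t)\<^sup>2)"
    using sq_dev by (intro integrableI_nonneg) (auto simp: top.not_eq_extremum intro: le_less_trans)
  have "ennreal (\<integral>\<omega>. (Y \<omega> - t)\<^sup>2 \<partial>M) \<le> ennreal K"
    using sq_dev integrable_sq_dev by (simp add: nn_integral_eq_integral)
  then have sq_dev_le: "(\<integral>\<omega>. (Y \<omega> - t)\<^sup>2 \<partial>M) \<le> K"
    using \<open>0 \<le> K\<close> by simp
  have "integrable M (\<lambda>\<omega>. Y \<omega> - t)"
    by (rule square_integrable_imp_integrable[OF _ integrable_sq_dev]) simp
  then have integrable_Y: "integrable M Y"
    using Bochner_Integration.integrable_add[of M _ "\<lambda>_. t"] by fastforce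
  have "(\<lambda>\<omega>. (Y \<omega>)\<^sup>2) = (\<lambda>\<omega>. (Y \<omega> - t)\<^sup>2 + 2 * t * Y \<omega> - t\<^sup>2)"
    by (auto simp: power2_eq_square algebra_simps)
  then have integrable_sq: "integrable M (\<lambda>\<omega>. (Y \<omega>)\<^sup>2)"
    using integrable_sq_dev integrable_Y by auto
  define \<mu> where "\<mu> = expectation Y"
  have "(\<lambda>\<omega>. (Y \<omega> - \<mu>)\<^sup>2) = (\<lambda>\<omega>. (Y \<omega> - t)\<^sup>2 - (2 * (\<mu> - t) * Y \<omega> - (\<mu>\<^sup>2 - t\<^sup>2)))"
    by (auto simp: power2_eq_square algebra_simps)
  then have "(\<integral>\<omega>. (Y \<omega> - \<mu>)\<^sup>2 \<partial>M) = (\<integral>\<omega>. (Y \<omega> - t)\<^sup>2 \<partial>M) - (2 * (\<mu> - t) * \<mu> - (\<mu>\<^sup>2 - t\<^sup>2))"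
    using integrable_sq_dev integrable_Y by (simp add: prob_space \<mu>_def)
  also have "\<dots> = (\<integral>\<omega>. (Y \<omega> - t)\<^sup>2 \<partial>M) - (\<mu> - t)\<^sup>2"
    by (simp add: power2_eq_square algebra_simps)
  also have "\<dots> \<le> K"
    using sq_dev_le zero_le_power2[of "\<mu> - t"] by linarith
  finally show ?thesis
    using integrable_sq by (simp add: var_ext_def \<mu>_def)
qed

lemma nn_integral_atLeast_le_if_Icc_le:
  fixes h :: "real \<Rightarrow> ennreal"
  assumes [measurable]: "h \<in> borel_measurable borel"
    and bound: "\<And>T. t \<le> T \<Longrightarrow> (\<integral>\<^sup>+x\<in>{t..T}. h x \<partial>lborel) \<le> B"
  shows "(\<integral>\<^sup>+x\<in>{t..}. h x \<partial>lborel) \<le> B"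
proof -
  define h_trunc where "h_trunc n x = h x * indicator {t..t + real n} x" for n :: nat and x
  have "incseq h_trunc"
    by (auto simp: incseq_def le_fun_def h_trunc_def intro!: mult_left_mono split: split_indicator)
  have pointwise: "h x * indicator {t..} x = (SUP n. h_trunc n x)" for x
  proof (rule antisym)
    obtain n :: nat where "x - t \<le> real n"
      using real_arch_simple by blast
    then have "h x * indicator {t..} x = h_trunc n x"
      by (auto simp: h_trunc_def split: split_indicator)
    then show "h x * indicator {t..} x \<le> (SUP n. h_trunc n x)"
      by (metis SUP_upper UNIV_I)
  qed (auto simp: h_trunc_def intro!: SUP_least mult_left_mono split: split_indicator)
  have "(\<integral>\<^sup>+x. h x * indicator {t..} x \<partial>lborel) = (\<integral>\<^sup>+x. (SUP n. h_trunc n x) \<partial>lborel)"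
    by (simp only: pointwise)
  also have "\<dots> = (SUP n. integral\<^sup>N lborel (h_trunc n))"
    by (rule nn_integral_monotone_convergence_SUP[OF \<open>incseq h_trunc\<close>]) (unfold h_trunc_def, measurable)
  also have "\<dots> \<le> B"
    by (auto simp: h_trunc_def[abs_def] intro!: SUP_least bound)
  finally show ?thesis .
qed

lemma set_nn_integral_Icc_sq_dev_le:
  fixes S f :: "real \<Rightarrow> real"
  assumes S_deriv: "\<And>x. (S has_real_derivative - f x) (at x)"
    and f_cont: "continuous_on UNIV f" and S_nonneg: "\<And>x. 0 \<le> S x"
    and "0 < c" and hazard: "\<And>x. t \<le> x \<Longrightarrow> c * S x \<le> f x" and "t \<le> T"
  shows "(\<integral>\<^sup>+x\<in>{t..T}. ennreal (f x * (x - t)\<^sup>2) \<partial>lborel) \<le> ennreal (2 * S t / c\<^sup>2)"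
proof -
  \<comment> \<open>q solves c (q u - u^2) = q' u, so f \<ge> c S makes \<Phi>' dominate f (x - t)^2.\<close>
  define q where "q u = u\<^sup>2 + 2 * u / c + 2 / c\<^sup>2" for u
  define \<Phi> where "\<Phi> x = - S x * q (x - t)" for x
  define \<phi> where "\<phi> x = f x * q (x - t) - S x * (2 * (x - t) + 2 / c)" for x
  have "(\<Phi> has_real_derivative \<phi> x) (at x)" for x
    unfolding \<Phi>_def \<phi>_def q_def using \<open>0 < c\<close>
    by (auto intro!: derivative_eq_intros S_deriv simp: field_simps power2_eq_square)
  moreover have "isCont \<phi> x" for x
    using f_cont DERIV_isCont[OF S_deriv] \<open>0 < c\<close>
    by (auto simp: \<phi>_def[abs_def] q_def continuous_on_eq_continuous_at intro!: continuous_intros)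
  ultimately have FTC: "has_bochner_integral lborel (\<lambda>x. \<phi> x * indicator {t..T} x) (\<Phi> T - \<Phi> t)"
    by (intro has_bochner_integral_FTC_Icc_real[OF \<open>t \<le> T\<close>])
  have dominated: "f x * (x - t)\<^sup>2 \<le> \<phi> x" if "t \<le> x" for x
  proof -
    have "\<phi> x - f x * (x - t)\<^sup>2 = (f x - c * S x) * (2 * (x - t) / c + 2 / c\<^sup>2)"
      using \<open>0 < c\<close> by (simp add: \<phi>_def q_def field_simps power2_eq_square)
    also have "\<dots> \<ge> 0"
      using hazard[OF that] that \<open>0 < c\<close> by (intro mult_nonneg_nonneg) auto
    finally show ?thesis by simp
  qed
  have \<phi>_nonneg: "0 \<le> \<phi> x * indicator {t..T} x" for x
  proof (cases "x \<in> {t..T}")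
    case True
    have "0 \<le> c * S x"
      using S_nonneg[of x] \<open>0 < c\<close> by simp
    then have "0 \<le> f x * (x - t)\<^sup>2"
      using hazard[of x] True by simp
    with dominated[of x] True show ?thesis by simp
  qed simp
  have "(\<integral>\<^sup>+x\<in>{t..T}. ennreal (f x * (x - t)\<^sup>2) \<partial>lborel)
      \<le> (\<integral>\<^sup>+x. ennreal (\<phi> x * indicator {t..T} x) \<partial>lborel)"
    by (intro nn_integral_mono) (auto simp: dominated intro!: ennreal_leI split: split_indicator)
  also have "\<dots> = ennreal (\<Phi> T - \<Phi> t)"
    using FTC \<phi>_nonneg
    by (simp add: nn_integral_eq_integral integrable.intros has_bochner_integral_integral_eq)
  also have "\<dots> \<le> ennreal (2 * S t / c\<^sup>2)"
  proof (intro ennreal_leI)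
    have "0 \<le> q (T - t)"
      using \<open>0 < c\<close> \<open>t \<le> T\<close> by (simp add: q_def)
    then have "\<Phi> T \<le> 0"
      using S_nonneg[of T] by (simp add: \<Phi>_def)
    moreover have "\<Phi> t = - (2 * S t / c\<^sup>2)"
      by (simp add: \<Phi>_def q_def)
    ultimately show "\<Phi> T - \<Phi> t \<le> 2 * S t / c\<^sup>2"
      by simp
  qed
  finally show ?thesis .
qed


lemma set_nn_integral_tail_sq_dev_le:
  fixes S f :: "real \<Rightarrow> real"
  assumes S_deriv: "\<And>x. (S has_real_derivative - f x) (at x)"
    and f_cont: "continuous_on UNIV f" and S_nonneg: "\<And>x. 0 \<le> S x"
    and "0 < c" and hazard: "\<And>x. t \<le> x \<Longrightarrow> c * S x \<le> f x"
  shows "(\<integral>\<^sup>+x\<in>{t..}. ennreal (f x * (x - t)\<^sup>2) \<partial>lborel) \<le> ennreal (2 * S t / c\<^sup>2)"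
proof (rule nn_integral_atLeast_le_if_Icc_le)
  have [measurable]: "f \<in> borel_measurable borel"
    using f_cont by (rule borel_measurable_continuous_onI)
  show "(\<lambda>x. ennreal (f x * (x - t)\<^sup>2)) \<in> borel_measurable borel"
    by measurable
qed (rule set_nn_integral_Icc_sq_dev_le[OF assms])

lemma ereal_eq_infinity_if_inverse_sq_le:
  fixes V :: ereal
  assumes "0 < k" and bound: "\<And>b. 0 < b \<Longrightarrow> ereal (1 / (k * b\<^sup>2)) \<le> V"
  shows "V = \<infinity>"
proof (rule ccontr)
  assume "V \<noteq> \<infinity>"
  moreover have "0 \<le> V"
    using order_trans[OF _ bound[OF zero_less_one]] \<open>0 < k\<close> by simp
  ultimately obtain v where "V = ereal v"
    by (cases V) auto
  define b where "b = sqrt (1 / (k * (\<bar>v\<bar> + 1)))"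
  have "0 < b"
    using \<open>0 < k\<close> by (simp add: b_def add_pos_nonneg)
  moreover have "1 / (k * b\<^sup>2) = \<bar>v\<bar> + 1"
    using \<open>0 < k\<close> by (simp add: b_def add_pos_nonneg)
  ultimately show False
    using bound[of b] \<open>V = ereal v\<close> by simp
qed

lemma inverse_mult_SUP_sq_le:
  fixes h :: "'b \<Rightarrow> real" and V :: ereal
  assumes "H \<noteq> {}" and "0 < k" and "0 \<le> V"
    and bound: "\<And>b. 0 < b \<Longrightarrow> (\<And>x. x \<in> H \<Longrightarrow> h x \<le> b) \<Longrightarrow> ereal (1 / (k * b\<^sup>2)) \<le> V"
  shows "inverse (ereal k * (SUP x \<in> H. ereal ((h x)\<^sup>2))) \<le> V"
proof -
  define \<Sigma> where "\<Sigma> = (SUP x \<in> H. ereal ((h x)\<^sup>2))"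
  have "0 \<le> \<Sigma>"
    using \<open>H \<noteq> {}\<close> unfolding \<Sigma>_def by (metis SUP_upper2 ereal_less_eq(5) ex_in_conv zero_le_power2)
  have le_sqrt: "h x \<le> sqrt s" if "\<Sigma> = ereal s" and "x \<in> H" for s x
  proof -
    have "ereal ((h x)\<^sup>2) \<le> \<Sigma>"
      unfolding \<Sigma>_def using \<open>x \<in> H\<close> by (rule SUP_upper)
    then have "(h x)\<^sup>2 \<le> s"
      using \<open>\<Sigma> = ereal s\<close> by simp
    then show ?thesis by (rule real_le_rsqrt)
  qed
  show ?thesis
  proof (cases \<Sigma>)
    case PInf
    then show ?thesis using \<open>0 < k\<close> \<open>0 \<le> V\<close> by (simp add: \<Sigma>_def)
  next
    case MInf
    then show ?thesis using \<open>0 \<le> \<Sigma>\<close> by simp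
  next
    case (real s)
    show ?thesis
    proof (cases "s = 0")
      case False
      then have "0 < s" using \<open>0 \<le> \<Sigma>\<close> real by simp
      have "ereal (1 / (k * (sqrt s)\<^sup>2)) \<le> V"
        using \<open>0 < s\<close> le_sqrt[OF real] by (intro bound) auto
      then show ?thesis
        using real \<open>0 < s\<close> \<open>0 < k\<close> by (simp add: \<Sigma>_def inverse_eq_divide)
    next
      case True
      \<comment> \<open>h \<le> 0 on H, so the hypothesis holds for every b > 0.\<close>
      have "V = \<infinity>"
        using le_sqrt[OF real] True \<open>0 < k\<close>
        by (intro ereal_eq_infinity_if_inverse_sq_le[of k] bound) force+
      then show ?thesis by simp
    qed
  qed
qed

lemma le_mult_inverse_INF_sq:
  fixes h :: "'b \<Rightarrow> real" and V :: ereal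
  assumes "H \<noteq> {}" and "0 < k" and h_nonneg: "\<And>x. x \<in> H \<Longrightarrow> 0 \<le> h x"
    and bound: "\<And>c. 0 < c \<Longrightarrow> (\<And>x. x \<in> H \<Longrightarrow> c \<le> h x) \<Longrightarrow> V \<le> ereal (k / c\<^sup>2)"
  shows "V \<le> ereal k * inverse (INF x \<in> H. ereal ((h x)\<^sup>2))"
proof -
  define I where "I = (INF x \<in> H. ereal ((h x)\<^sup>2))"
  obtain x\<^sub>0 where "x\<^sub>0 \<in> H"
    using \<open>H \<noteq> {}\<close> by blast
  then have "I \<le> ereal ((h x\<^sub>0)\<^sup>2)"
    unfolding I_def by (rule INF_lower)
  moreover have "0 \<le> I"
    unfolding I_def by (rule INF_greatest) simp
  ultimately obtain i where I: "I = ereal i" and "0 \<le> i"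
    by (cases I) auto
  show ?thesis
  proof (cases "i = 0")
    case True
    then show ?thesis using I \<open>0 < k\<close> by (simp add: I_def)
  next
    case False
    then have "0 < i" using \<open>0 \<le> i\<close> by simp
    have "V \<le> ereal (k / (sqrt i)\<^sup>2)"
    proof (rule bound)
      show "0 < sqrt i" using \<open>0 < i\<close> by simp
    next
      fix x assume "x \<in> H"
      then have "I \<le> ereal ((h x)\<^sup>2)"
        unfolding I_def by (rule INF_lower)
      then show "sqrt i \<le> h x"
        using I h_nonneg[OF \<open>x \<in> H\<close>] by (simp add: real_le_lsqrt)
    qed
    then show ?thesis
      using I \<open>0 < i\<close> by (simp add: I_def inverse_eq_divide)
  qed
qed

locale continuous_density_rv = prob_space M for M :: "'a measure" +
  fixes X :: "'a \<Rightarrow> real" and f :: "real \<Rightarrow> real"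
  assumes distributed_X: "distributed M lborel X (\<lambda>x. ennreal (f x))"
    and continuous_f: "continuous_on UNIV f"
    and f_nonneg: "\<And>x. 0 \<le> f x"
begin

lemma X_measurable [measurable]: "X \<in> borel_measurable M"
  using distributed_measurable[OF distributed_X] by simp

lemma f_measurable [measurable]: "f \<in> borel_measurable borel"
  using continuous_f by (rule borel_measurable_continuous_onI)

lemma emeasure_X_in:
  assumes "B \<in> sets borel"
  shows "emeasure M {\<omega> \<in> space M. X \<omega> \<in> B} = (\<integral>\<^sup>+x\<in>B. ennreal (f x) \<partial>lborel)"
proof -
  have "{\<omega> \<in> space M. X \<omega> \<in> B} = X -` B \<inter> space M"
    by auto
  then show ?thesis
    using distributed_emeasure[OF distributed_X, of B] assms by simp
qed

lemma prob_X_in: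
  assumes "B \<in> sets borel"
  shows "prob {\<omega> \<in> space M. X \<omega> \<in> B} = (LINT x:B|lborel. f x)"
proof -
  have [measurable]: "B \<in> sets borel"
    by (fact assms)
  show ?thesis
    using emeasure_X_in[OF assms] f_nonneg unfolding measure_def set_lebesgue_integral_def
    by (subst integral_eq_nn_integral)
      (auto intro!: arg_cong[where f = enn2real] nn_integral_cong split: split_indicator)
qed

lemma prob_X_eq: "prob {\<omega> \<in> space M. X \<omega> = a} = 0"
  using emeasure_X_in[of "{a}"] nn_integral_null_set[OF countable_imp_null_set_lborel, of "{a}"]
  by (simp add: measure_def)

lemma surv_rv_diff:
  assumes "a \<le> b"
  shows "surv_rv M X a - surv_rv M X b = integral {a..b} f"
proof -
  have "{\<omega> \<in> space M. X \<omega> > a} - {\<omega> \<in> space M. X \<omega> > b} = {\<omega> \<in> space M. X \<omega> \<in> {a<..b}}"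
    by auto
  moreover have "prob ({\<omega> \<in> space M. X \<omega> > a} - {\<omega> \<in> space M. X \<omega> > b})
      = prob {\<omega> \<in> space M. X \<omega> > a} - prob {\<omega> \<in> space M. X \<omega> > b}"
    using assms by (intro finite_measure_Diff) auto
  ultimately have "surv_rv M X a - surv_rv M X b = prob {\<omega> \<in> space M. X \<omega> \<in> {a<..b}}"
    by (simp add: surv_rv_def)
  also have "\<dots> = (LINT x:{a<..b}|lborel. f x)"
    by (rule prob_X_in) simp
  also have "\<dots> = (LINT x:{a..b}|lborel. f x)"
    using AE_lborel_singleton[of a]
    by (intro set_integral_cong_set) (auto simp: set_borel_measurable_def elim!: eventually_mono)
  also have "\<dots> = integral {a..b} f"
    using borel_integrable_compact[OF compact_Icc continuous_on_subset[OF continuous_f]]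
    by (intro set_borel_integral_eq_integral) (auto simp: set_integrable_def)
  finally show ?thesis .
qed

lemma surv_rv_has_derivative: "(surv_rv M X has_real_derivative - f x) (at x)"
proof -
  define a where "a = x - 1"
  have "((\<lambda>u. integral {a..u} f) has_vector_derivative f x) (at x within {a..x + 1})"
    by (rule integral_has_vector_derivative) (auto simp: a_def intro: continuous_on_subset[OF continuous_f])
  then have "((\<lambda>u. integral {a..u} f) has_real_derivative f x) (at x)"
    by (simp add: at_within_Icc_at a_def has_real_derivative_iff_has_vector_derivative)
  then have "((\<lambda>u. surv_rv M X a - integral {a..u} f) has_real_derivative - f x) (at x)"
    by (intro derivative_eq_intros) auto
  then show ?thesis
  proof (rule has_field_derivative_transform_within_open[of _ _ _ "{a<..}"])
    show "surv_rv M X a - integral {a..y} f = surv_rv M X y" if "y \<in> {a<..}" for y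
      using surv_rv_diff[of a y] that by simp
  qed (auto simp: a_def)
qed

lemma surv_rv_nonneg: "0 \<le> surv_rv M X x"
  by (simp add: surv_rv_def)

lemma surv_rv_antimono:
  assumes "a \<le> b"
  shows "surv_rv M X b \<le> surv_rv M X a"
  unfolding surv_rv_def using assms by (intro finite_measure_mono) auto

lemma f_eq_0_if_surv_rv_eq_0:
  assumes "surv_rv M X x = 0"
  shows "f x = 0"
proof -
  have "\<forall>y. \<bar>x - y\<bar> < 1 \<longrightarrow> surv_rv M X x \<le> surv_rv M X y"
    using assms surv_rv_nonneg by simp
  from DERIV_local_min[OF surv_rv_has_derivative _ this] show ?thesis
    by simp
qed

lemma prob_space_uniform_measure_greater:
  assumes "0 < surv_rv M X t"
  shows "prob_space (uniform_measure M {\<omega> \<in> space M. X \<omega> > t})"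
  using assms by (intro prob_space_uniform_measure) (simp_all add: surv_rv_def emeasure_eq_measure)

lemma distributed_uniform_measure_greater:
  assumes "0 < surv_rv M X t"
  shows "distributed (uniform_measure M {\<omega> \<in> space M. X \<omega> > t}) lborel X
           (\<lambda>y. ennreal (f y * indicator {t<..} y / surv_rv M X t))"
proof -
  define A where "A = {\<omega> \<in> space M. X \<omega> > t}"
  define k where "k y = ennreal (indicator {t<..} y / surv_rv M X t)" for y
  have [measurable]: "A \<in> sets M" "k \<in> borel_measurable borel"
    unfolding A_def k_def[abs_def] by measurable
  have "emeasure M A = ennreal (surv_rv M X t)"
    unfolding A_def surv_rv_def by (simp add: emeasure_eq_measure)
  moreover have "1 / ennreal (surv_rv M X t) = ennreal (1 / surv_rv M X t)"
    using divide_ennreal[of 1 "surv_rv M X t"] assms by simp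
  ultimately have "uniform_measure M A = density M (\<lambda>\<omega>. k (X \<omega>))"
    unfolding uniform_measure_def using assms
    by (intro density_cong) (auto simp: A_def k_def divide_ennreal split: split_indicator)
  then have "distr (uniform_measure M A) lborel X = density (distr M lborel X) k"
    by (simp add: density_distr)
  also have "\<dots> = density lborel (\<lambda>y. ennreal (f y) * k y)"
    by (simp add: distributed_distr_eq_density[OF distributed_X] density_density_eq)
  also have "\<dots> = density lborel (\<lambda>y. ennreal (f y * indicator {t<..} y / surv_rv M X t))"
    using assms by (intro density_cong) (auto simp: k_def ennreal_mult'[symmetric] f_nonneg)
  finally show ?thesis
    unfolding A_def distributed_def by (simp add: measurable_cong_sets[OF sets_uniform_measure refl])
qed

lemma var_ext_right_tail_ge:
  assumes "0 < surv_rv M X t" and "0 < b"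
    and hazard_le: "\<And>x. t \<le> x \<Longrightarrow> 0 < surv_rv M X x \<Longrightarrow> f x / surv_rv M X x \<le> b"
  shows "ereal (1 / (12 * b\<^sup>2)) \<le> var_ext (uniform_measure M {\<omega> \<in> space M. X \<omega> > t}) X"
proof -
  interpret conditional: prob_space "uniform_measure M {\<omega> \<in> space M. X \<omega> > t}"
    using assms(1) by (rule prob_space_uniform_measure_greater)
  have "f y * indicator {t<..} y / surv_rv M X t \<le> b" for y
  proof (cases "t < y \<and> 0 < surv_rv M X y")
    case True
    then have "f y / surv_rv M X t \<le> f y / surv_rv M X y"
      using surv_rv_antimono[of t y] f_nonneg[of y] by (intro divide_left_mono) auto
    also have "\<dots> \<le> b"
      using hazard_le True by simp
    finally show ?thesis
      using True by simp
  next
    case False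
    then have "f y * indicator {t<..} y = 0"
      using f_eq_0_if_surv_rv_eq_0[of y] surv_rv_nonneg[of y] by (auto split: split_indicator)
    then show ?thesis
      using \<open>0 < b\<close> by (metis div_0 less_imp_le)
  qed
  with distributed_uniform_measure_greater[OF assms(1)] show ?thesis
    using f_nonneg assms(1) \<open>0 < b\<close> by (intro conditional.var_ext_ge_if_density_le) auto
qed

lemma var_ext_right_tail_le:
  assumes "0 < surv_rv M X t" and "0 < c"
    and hazard_ge: "\<And>x. t \<le> x \<Longrightarrow> 0 < surv_rv M X x \<Longrightarrow> c \<le> f x / surv_rv M X x"
  shows "var_ext (uniform_measure M {\<omega> \<in> space M. X \<omega> > t}) X \<le> ereal (2 / c\<^sup>2)"
proof -
  let ?S = "surv_rv M X" and ?N = "uniform_measure M {\<omega> \<in> space M. X \<omega> > t}"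
  interpret conditional: prob_space ?N
    using assms(1) by (rule prob_space_uniform_measure_greater)
  have "c * ?S x \<le> f x" if "t \<le> x" for x
  proof (cases "?S x = 0")
    case False
    then have "0 < ?S x"
      using surv_rv_nonneg[of x] by simp
    then show ?thesis
      using hazard_ge[OF that] by (simp add: field_simps)
  qed (simp add: f_nonneg)
  then have tail: "(\<integral>\<^sup>+x\<in>{t..}. ennreal (f x * (x - t)\<^sup>2) \<partial>lborel) \<le> ennreal (2 * ?S t / c\<^sup>2)"
    by (intro set_nn_integral_tail_sq_dev_le[OF surv_rv_has_derivative continuous_f surv_rv_nonneg \<open>0 < c\<close>])
  have "(\<integral>\<^sup>+\<omega>. ennreal ((X \<omega> - t)\<^sup>2) \<partial>?N)
      = (\<integral>\<^sup>+y. ennreal (f y * indicator {t<..} y / ?S t) * ennreal ((y - t)\<^sup>2) \<partial>lborel)"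
    by (rule distributed_nn_integral[OF distributed_uniform_measure_greater[OF assms(1)], symmetric]) simp
  also have "\<dots> \<le> (\<integral>\<^sup>+y. ennreal (1 / ?S t) * (ennreal (f y * (y - t)\<^sup>2) * indicator {t..} y) \<partial>lborel)"
    using assms(1)
    by (intro nn_integral_mono) (auto simp: ennreal_mult'[symmetric] f_nonneg split: split_indicator)
  also have "\<dots> = ennreal (1 / ?S t) * (\<integral>\<^sup>+x\<in>{t..}. ennreal (f x * (x - t)\<^sup>2) \<partial>lborel)"
    by (rule nn_integral_cmult) simp
  also have "\<dots> \<le> ennreal (1 / ?S t) * ennreal (2 * ?S t / c\<^sup>2)"
    by (rule mult_left_mono[OF tail]) simp
  also have "\<dots> = ennreal (2 / c\<^sup>2)"
    using assms(1) by (simp add: ennreal_mult'[symmetric])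
  finally show ?thesis
    by (intro conditional.var_ext_le_if_sq_dev_le)
      (simp_all add: measurable_cong_sets[OF sets_uniform_measure refl])
qed

lemma var_ext_right_tail_bounds:
  assumes "0 < surv_rv M X t"
  shows "inverse (12 * (SUP x \<in> {x. x \<ge> t \<and> surv_rv M X x > 0}. ereal ((f x / surv_rv M X x)\<^sup>2)))
      \<le> var_ext (uniform_measure M {\<omega> \<in> space M. X \<omega> > t}) X"
    and "var_ext (uniform_measure M {\<omega> \<in> space M. X \<omega> > t}) X
      \<le> 4 * inverse (INF x \<in> {x. x \<ge> t \<and> surv_rv M X x > 0}. ereal ((f x / surv_rv M X x)\<^sup>2))"
proof -
  let ?H = "{x. x \<ge> t \<and> surv_rv M X x > 0}"
  let ?V = "var_ext (uniform_measure M {\<omega> \<in> space M. X \<omega> > t}) X"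
  have "?H \<noteq> {}"
    using assms by auto
  have "inverse (ereal 12 * (SUP x \<in> ?H. ereal ((f x / surv_rv M X x)\<^sup>2))) \<le> ?V"
    by (rule inverse_mult_SUP_sq_le[OF \<open>?H \<noteq> {}\<close>])
      (auto intro: var_ext_right_tail_ge[OF assms] simp: var_ext_nonneg)
  then show "inverse (12 * (SUP x \<in> ?H. ereal ((f x / surv_rv M X x)\<^sup>2))) \<le> ?V"
    by simp
  have "?V \<le> ereal 4 * inverse (INF x \<in> ?H. ereal ((f x / surv_rv M X x)\<^sup>2))"
  proof (rule le_mult_inverse_INF_sq[OF \<open>?H \<noteq> {}\<close>])
    fix c :: real
    assume "0 < c" and "\<And>x. x \<in> ?H \<Longrightarrow> c \<le> f x / surv_rv M X x"
    then have "?V \<le> ereal (2 / c\<^sup>2)"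
      by (intro var_ext_right_tail_le[OF assms]) auto
    also have "\<dots> \<le> ereal (4 / c\<^sup>2)"
      by (simp add: divide_right_mono)
    finally show "?V \<le> ereal (4 / c\<^sup>2)" .
  qed (simp_all add: f_nonneg surv_rv_nonneg)
  then show "?V \<le> 4 * inverse (INF x \<in> ?H. ereal ((f x / surv_rv M X x)\<^sup>2))"
    by simp
qed

lemma continuous_density_rv_uminus: "continuous_density_rv M (\<lambda>\<omega>. - X \<omega>) (\<lambda>x. f (- x))"
proof unfold_locales
  show "distributed M lborel (\<lambda>\<omega>. - X \<omega>) (\<lambda>x. ennreal (f (- x)))"
    using distributed_affine[OF distributed_X, of "-1" 0] by (simp add: divide_ennreal_def)
  show "continuous_on UNIV (\<lambda>x. f (- x))"
    by (intro continuous_on_compose2[OF continuous_f]) (auto intro: continuous_intros)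
qed (simp add: f_nonneg)

lemma surv_rv_uminus: "surv_rv M (\<lambda>\<omega>. - X \<omega>) y = cdf_rv M X (- y)"
proof -
  have "{\<omega> \<in> space M. X \<omega> \<le> - y} = {\<omega> \<in> space M. - X \<omega> > y} \<union> {\<omega> \<in> space M. X \<omega> = - y}"
    by auto
  then have "cdf_rv M X (- y) = prob {\<omega> \<in> space M. - X \<omega> > y} + prob {\<omega> \<in> space M. X \<omega> = - y}"
    unfolding cdf_rv_def by (simp add: finite_measure_Union disjoint_iff)
  then show ?thesis
    by (simp add: surv_rv_def prob_X_eq)
qed

lemma var_ext_left_tail_bounds:
  assumes "0 < cdf_rv M X t"
  shows "inverse (12 * (SUP x \<in> {x. x \<le> t \<and> cdf_rv M X x > 0}. ereal ((f x / cdf_rv M X x)\<^sup>2)))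
      \<le> var_ext (uniform_measure M {\<omega> \<in> space M. X \<omega> < t}) X"
    and "var_ext (uniform_measure M {\<omega> \<in> space M. X \<omega> < t}) X
      \<le> 4 * inverse (INF x \<in> {x. x \<le> t \<and> cdf_rv M X x > 0}. ereal ((f x / cdf_rv M X x)\<^sup>2))"
proof -
  interpret reflected: continuous_density_rv M "\<lambda>\<omega>. - X \<omega>" "\<lambda>x. f (- x)"
    by (rule continuous_density_rv_uminus)
  let ?S = "surv_rv M (\<lambda>\<omega>. - X \<omega>)"
  have H: "{y. y \<ge> - t \<and> ?S y > 0} = uminus ` {x. x \<le> t \<and> cdf_rv M X x > 0}"
  proof (intro set_eqI iffI)
    show "y \<in> uminus ` {x. x \<le> t \<and> cdf_rv M X x > 0}" if "y \<in> {y. y \<ge> - t \<and> ?S y > 0}" for y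
      using that by (intro image_eqI[of _ _ "- y"]) (auto simp: surv_rv_uminus)
  qed (auto simp: surv_rv_uminus)
  have "uniform_measure M {\<omega> \<in> space M. - X \<omega> > - t} = uniform_measure M {\<omega> \<in> space M. X \<omega> < t}"
    by (rule arg_cong[where f = "uniform_measure M"]) auto
  then show
    "inverse (12 * (SUP x \<in> {x. x \<le> t \<and> cdf_rv M X x > 0}. ereal ((f x / cdf_rv M X x)\<^sup>2)))
      \<le> var_ext (uniform_measure M {\<omega> \<in> space M. X \<omega> < t}) X"
    "var_ext (uniform_measure M {\<omega> \<in> space M. X \<omega> < t}) X
      \<le> 4 * inverse (INF x \<in> {x. x \<le> t \<and> cdf_rv M X x > 0}. ereal ((f x / cdf_rv M X x)\<^sup>2))"
    using reflected.var_ext_right_tail_bounds[of "- t"] assms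
    unfolding H image_image by (simp_all add: surv_rv_uminus var_ext_uminus)
qed

end

theorem lemma3p3:
  fixes M :: "'a measure" and X :: "'a \<Rightarrow> real" and f :: "real \<Rightarrow> real"
  assumes "prob_space M"
    and "distributed M lborel X (\<lambda>x. ennreal (f x))"
    and "continuous_on UNIV f"
    and "\<And>x. f x \<ge> 0"
  shows
    "(\<forall>t. t \<ge> quantile_rv M X (1/2) \<and> surv_rv M X t > 0 \<longrightarrow>
        inverse (12 * (SUP x \<in> {x. x \<ge> t \<and> surv_rv M X x > 0}. ereal ((hazard2 M X f x)\<^sup>2)))
          \<le> var_ext (uniform_measure M {\<omega> \<in> space M. X \<omega> > t}) X
      \<and> var_ext (uniform_measure M {\<omega> \<in> space M. X \<omega> > t}) X
          \<le> 4 * inverse (INF x \<in> {x. x \<ge> t \<and> surv_rv M X x > 0}. ereal ((hazard2 M X f x)\<^sup>2)))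
   \<and> (\<forall>t. t < quantile_rv M X (1/2) \<and> cdf_rv M X t > 0 \<longrightarrow>
        inverse (12 * (SUP x \<in> {x. x \<le> t \<and> cdf_rv M X x > 0}. ereal ((hazard2 M X f x)\<^sup>2)))
          \<le> var_ext (uniform_measure M {\<omega> \<in> space M. X \<omega> < t}) X
      \<and> var_ext (uniform_measure M {\<omega> \<in> space M. X \<omega> < t}) X
          \<le> 4 * inverse (INF x \<in> {x. x \<le> t \<and> cdf_rv M X x > 0}. ereal ((hazard2 M X f x)\<^sup>2)))"
proof -
  interpret continuous_density_rv M X f
    using assms by (simp add: continuous_density_rv_def continuous_density_rv_axioms_def)
  \<comment> \<open>On x \<ge> t \<ge> \<xi>_1/2 the hazard is f / surv_rv, on x \<le> t < \<xi>_1/2 it is f / cdf_rv.\<close>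
  show ?thesis
    using var_ext_right_tail_bounds var_ext_left_tail_bounds
    by (simp add: hazard2_def cong: SUP_cong_simp INF_cong_simp)
qed

end
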